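(* Let $l\in\mathbb N$, let $V_{l+1}=\{v_1,\dots,v_{l+1}\}$, and let $A$ be the adjacency matrix of a balanced tree $T\in\mathcal T_{V_{l+1}}$. Then the number of balanced trees $G\in\mathcal T_{V_{l+1}}$ with adjacency matrix $A(G)=A$ equals $$2l\prod_{i=1}^{l+1}(\operatorname{indeg}_T(v_i)-1)!.$$
   Context: For a finite ordered vertex set $V$ and $N\ge1$, a route through $V$ of length $N$ is a sequence $\mathbf i\in V^N$ whose set of entries equals $V$; its circuit multigraph $G_{\mathbf i}$ has vertex set $V$ and edges $1,\dots,N$ (own identity; parallel edges and loops allowed), edge $k<N$ from $i_k$ to $i_{k+1}$ and edge $N$ from $i_N$ to $i_1$; $\mathcal C_{V,N}$ is the set of all such graphs, and $G_{\mathbf i}$ is identified with its route $\mathbf i$ (so distinct routes give distinct graphs). A directed multigraph is balanced if its edges split into pairs $(e,e')$ with the head of $e$ equal to the tail of $e'$ and vice versa. $\mathcal T_{V_{l+1}}$ is the set of balanced $G\in\mathcal C_{V_{l+1},2l}$ (balanced trees). The adjacency matrix $A(G)$ has entry $A(G)_{v,w}$ equal to the number of edges from $v$ to $w$; $\operatorname{indeg}_T(v)$ is the number of edges with head $v$. *)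

theory Defs
  imports Main
begin

text \<open>A route through V of length N: a list of length N (N \<ge> 1) whose set of entries is V.
  Edges are indexed 0..N-1; edge k goes from entry k to entry (k+1) mod N.\<close>

definition is_route :: "'a set \<Rightarrow> nat \<Rightarrow> 'a list \<Rightarrow> bool" where
  "is_route V N xs \<longleftrightarrow> N \<ge> 1 \<and> length xs = N \<and> set xs = V"

definition circuit_graphs :: "'a set \<Rightarrow> nat \<Rightarrow> 'a list set" where
  "circuit_graphs V N = {xs. is_route V N xs}"

definition etail :: "'a list \<Rightarrow> nat \<Rightarrow> 'a" where
  "etail xs k = xs ! k"

definition ehead :: "'a list \<Rightarrow> nat \<Rightarrow> 'a" where
  "ehead xs k = xs ! (Suc k mod length xs)"

text \<open>Balanced: the edge set splits into pairs (e,e') of distinct edges with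
  head e = tail e' and tail e = head e'; encoded as a fixed-point-free involution on the edges.\<close>

definition balanced :: "'a list \<Rightarrow> bool" where
  "balanced xs \<longleftrightarrow> (\<exists>\<sigma>::nat \<Rightarrow> nat. \<forall>k < length xs.
      \<sigma> k < length xs \<and> \<sigma> k \<noteq> k \<and> \<sigma> (\<sigma> k) = k \<and>
      ehead xs k = etail xs (\<sigma> k) \<and> etail xs k = ehead xs (\<sigma> k))"

definition balanced_trees :: "'a set \<Rightarrow> nat \<Rightarrow> 'a list set" where
  "balanced_trees V l = {G \<in> circuit_graphs V (2 * l). balanced G}"

definition adj :: "'a list \<Rightarrow> 'a \<Rightarrow> 'a \<Rightarrow> nat" where
  "adj G v w = card {k. k < length G \<and> etail G k = v \<and> ehead G k = w}"

definition indeg :: "'a list \<Rightarrow> 'a \<Rightarrow> nat" where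
  "indeg G v = card {k. k < length G \<and> ehead G k = v}"

end

theory Submission
  imports Defs "HOL-Library.Multiset"
begin

text \<open>A balanced tree on \<open>l + 1\<close> vertices walks around a tree, traversing each of its \<open>l\<close> edges
  once in each direction. So its adjacency matrix is symmetric, 0/1-valued and loop-free, and every
  route with the same edge multiset is again a balanced tree. To count the routes with given edge
  multiset and given first vertex \<open>r\<close>, remove a leaf \<open>w \<noteq> r\<close> with neighbour \<open>p\<close>: each route
  arises uniquely from a route of the smaller tree by inserting the detour \<open>p w\<close> in front of an
  occurrence of \<open>p\<close>, or at the end if \<open>p = r\<close>. This multiplies the count by \<open>indeg p\<close>, plus one
  if \<open>p = r\<close>, and induction gives \<open>indeg r * \<Prod>v. (indeg v - 1)!\<close>. Summing over \<open>r\<close> gives the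
  factor \<open>2 l\<close>.\<close>

lemma zip_rotate1:
  "length xs = length ys \<Longrightarrow> zip (rotate1 xs) (rotate1 ys) = rotate1 (zip xs ys)"
  by (cases xs; cases ys) auto

lemma mset_rotate1 [simp]: "mset (rotate1 xs) = mset xs"
  by (cases xs) auto

lemma eq_if_count_image_mset_eq_1:
  assumes "count (image_mset f M) b = 1" and "x \<in># M" "y \<in># M" and "f x = b" "f y = b"
  shows "x = y"
proof (rule ccontr)
  assume "x \<noteq> y"
  obtain M1 where M1: "M = add_mset x M1"
    using assms(2) by (metis multi_member_split)
  with \<open>x \<noteq> y\<close> assms(3) obtain M2 where "M1 = add_mset y M2"
    by (metis insert_noteq_member multi_member_split)
  with M1 have "count (image_mset f M) b \<ge> 2"
    using assms(4,5) by simp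
  with assms(1) show False
    by simp
qed

definition circuit_edges :: "'a list \<Rightarrow> ('a \<times> 'a) multiset" where
  "circuit_edges G = mset (zip G (rotate1 G))"

lemma image_mset_fst_circuit_edges [simp]: "image_mset fst (circuit_edges G) = mset G"
  by (simp add: circuit_edges_def flip: mset_map)

lemma image_mset_snd_circuit_edges [simp]: "image_mset snd (circuit_edges G) = mset G"
  by (simp add: circuit_edges_def flip: mset_map)

lemma size_circuit_edges [simp]: "size (circuit_edges G) = length G"
  by (simp add: circuit_edges_def)

lemma adj_eq_count_circuit_edges: "adj G u v = count (circuit_edges G) (u, v)"
proof -
  have "count (circuit_edges G) (u, v) = length (filter ((=) (u, v)) (zip G (rotate1 G)))"
    by (simp add: circuit_edges_def count_mset count_list_eq_length_filter)
  also have "\<dots> = card {k. k < length G \<and> (u, v) = zip G (rotate1 G) ! k}"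
    by (simp add: length_filter_conv_card)
  also have "\<dots> = adj G u v"
    unfolding adj_def etail_def ehead_def by (rule arg_cong[where f = card]) (auto simp: nth_rotate1)
  finally show ?thesis by simp
qed

lemma adj_eq_iff_circuit_edges_eq: "adj G = adj H \<longleftrightarrow> circuit_edges G = circuit_edges H"
  by (auto simp: fun_eq_iff adj_eq_count_circuit_edges multiset_eq_iff)

lemma indeg_eq_count_mset: "indeg G v = count (mset G) v"
proof -
  have "count (mset G) v = count (mset (rotate1 G)) v"
    by simp
  also have "\<dots> = length (filter ((=) v) (rotate1 G))"
    by (simp only: count_mset count_list_eq_length_filter)
  also have "\<dots> = card {k. k < length G \<and> v = rotate1 G ! k}"
    by (simp add: length_filter_conv_card)
  also have "\<dots> = indeg G v"
    unfolding indeg_def ehead_def by (rule arg_cong[where f = card]) (auto simp: nth_rotate1)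
  finally show ?thesis by simp
qed

lemma set_circuit_edges_subset: "set_mset (circuit_edges G) \<subseteq> set G \<times> set G"
  by (auto simp: circuit_edges_def dest: set_zip_leftD set_zip_rightD)

lemma circuit_edges_rotate1 [simp]: "circuit_edges (rotate1 G) = circuit_edges G"
  by (simp add: circuit_edges_def zip_rotate1)

lemma circuit_edges_rotate [simp]: "circuit_edges (rotate n G) = circuit_edges G"
  by (induction n) simp_all

lemma circuit_edges_append_commute: "circuit_edges (xs @ ys) = circuit_edges (ys @ xs)"
  by (metis circuit_edges_rotate rotate_append)

lemma circuit_edges_pair: "circuit_edges [a, b] = {#(a, b), (b, a)#}"
  by (simp add: circuit_edges_def)

lemma in_circuit_edges_Cons_Cons: "(x, y) \<in># circuit_edges (x # y # zs)"
  by (simp add: circuit_edges_def)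

lemma circuit_edges_detour:
  "circuit_edges (p # w # p # zs) = circuit_edges (p # zs) + {#(p, w), (w, p)#}"
  by (simp add: circuit_edges_def)

lemma circuit_edges_insert_detour:
  assumes "a @ b \<noteq> []" and "hd (b @ a) = p"
  shows "circuit_edges (a @ p # w # b) = circuit_edges (a @ b) + {#(p, w), (w, p)#}"
proof -
  obtain zs where zs: "b @ a = p # zs"
    using assms by (cases "b @ a") auto
  have "circuit_edges (a @ p # w # b) = circuit_edges (p # w # p # zs)"
    using zs by (metis append_Cons circuit_edges_append_commute)
  also have "\<dots> = circuit_edges (b @ a) + {#(p, w), (w, p)#}"
    by (simp add: circuit_edges_detour zs)
  finally show ?thesis
    by (simp add: circuit_edges_append_commute)
qed

lemma circuit_split_at_leaf:
  assumes w: "count (mset G) w = 1" and hd_G: "hd G \<noteq> w"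
    and pw: "(p, w) \<in># circuit_edges G" and wp: "(w, p) \<in># circuit_edges G"
    and len: "length G \<ge> 3"
  obtains a b where "G = a @ p # w # b" "a @ b \<noteq> []" "hd (b @ a) = p" "hd (a @ b) = hd G"
    "circuit_edges G = circuit_edges (a @ b) + {#(p, w), (w, p)#}"
proof -
  have "w \<in> set G"
    using w by (metis count_mset_0_iff zero_neq_one)
  then obtain xs b where G: "G = xs @ w # b"
    by (meson split_list)
  with hd_G have "xs \<noteq> []"
    by auto
  then obtain a p' where "xs = a @ [p']"
    by (metis rev_exhaust)
  with G have G: "G = a @ p' # w # b"
    by simp
  obtain q rest where q_rest: "b @ a @ [p'] = q # rest"
    by (cases "b @ a @ [p']") auto
  have "circuit_edges G = circuit_edges (p' # w # b @ a)"
    using G circuit_edges_append_commute[of a] by simp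
  then have "(p', w) \<in># circuit_edges G"
    by (simp add: in_circuit_edges_Cons_Cons)
  then have p': "p' = p"
    using eq_if_count_image_mset_eq_1[of snd "circuit_edges G" w "(p', w)" "(p, w)"] w pw
    by simp
  have "circuit_edges G = circuit_edges (w # q # rest)"
    using G q_rest circuit_edges_append_commute[of "a @ [p']"] by simp
  then have "(w, q) \<in># circuit_edges G"
    by (simp add: in_circuit_edges_Cons_Cons)
  then have q: "q = p"
    using eq_if_count_image_mset_eq_1[of fst "circuit_edges G" w "(w, q)" "(w, p)"] w wp
    by simp
  have ab: "a @ b \<noteq> []"
    using G len by auto
  have hd_ba: "hd (b @ a) = p"
  proof (cases b)
    case Nil
    with ab q_rest q show ?thesis
      by (cases a) simp_all
  next
    case (Cons c b')
    with q_rest q show ?thesis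
      by simp
  qed
  show thesis
  proof
    show "G = a @ p # w # b" "a @ b \<noteq> []" "hd (b @ a) = p"
      using G p' ab hd_ba by simp_all
    show "hd (a @ b) = hd G"
      using G p' hd_ba by (cases a) auto
    show "circuit_edges G = circuit_edges (a @ b) + {#(p, w), (w, p)#}"
      using G p' circuit_edges_insert_detour[OF ab hd_ba] by simp
  qed
qed

definition rooted_circuits :: "'a \<Rightarrow> ('a \<times> 'a) multiset \<Rightarrow> 'a list set" where
  "rooted_circuits r M = {G. G \<noteq> [] \<and> hd G = r \<and> circuit_edges G = M}"

lemma finite_rooted_circuits: "finite (rooted_circuits r M)"
proof (rule finite_subset)
  show "rooted_circuits r M \<subseteq> {G. set G \<subseteq> fst ` set_mset M \<and> length G = size M}"
  proof
    fix G
    assume G: "G \<in> rooted_circuits r M"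
    have "set G = fst ` set_mset (circuit_edges G)"
      by (metis image_mset_fst_circuit_edges set_image_mset set_mset_mset)
    with G show "G \<in> {G. set G \<subseteq> fst ` set_mset M \<and> length G = size M}"
      by (auto simp: rooted_circuits_def)
  qed
  show "finite {G. set G \<subseteq> fst ` set_mset M \<and> length G = size M}"
    by (rule finite_lists_length_eq) simp
qed

lemma rooted_circuits_pair:
  assumes "a \<noteq> b"
  shows "rooted_circuits a {#(a, b), (b, a)#} = {[a, b]}"
proof (intro equalityI subsetI)
  fix G
  assume "G \<in> rooted_circuits a {#(a, b), (b, a)#}"
  then have E: "circuit_edges G = {#(a, b), (b, a)#}" and "hd G = a"
    by (auto simp: rooted_circuits_def)
  moreover have "length G = 2"
    using size_circuit_edges[of G] E by simp
  ultimately obtain y where G: "G = [a, y]"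
    by (auto simp: length_Suc_conv numeral_2_eq_2)
  then have "(a, y) \<in># {#(a, b), (b, a)#}"
    using E in_circuit_edges_Cons_Cons[of a y "[]"] by simp
  with assms G show "G \<in> {[a, b]}"
    by auto
qed (simp add: rooted_circuits_def circuit_edges_pair)

definition insert_detour :: "'a \<Rightarrow> 'a \<Rightarrow> 'a list \<Rightarrow> nat \<Rightarrow> 'a list" where
  "insert_detour p w G j = take j G @ p # w # drop j G"

text \<open>Position \<open>length G\<close> places the detour at the final return to the root, so it is
  admissible only when \<open>p = r\<close>.\<close>

definition detour_positions :: "'a \<Rightarrow> 'a \<Rightarrow> 'a list \<Rightarrow> nat set" where
  "detour_positions r p G = {j. j < length G \<and> G ! j = p} \<union> (if p = r then {length G} else {})"

lemma card_detour_positions: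
  "card (detour_positions r p G) = count (mset G) p + of_bool (p = r)"
proof -
  have "card {j. j < length G \<and> G ! j = p} = count (mset G) p"
    by (simp add: count_mset count_list_eq_length_filter length_filter_conv_card eq_commute)
  then show ?thesis
    by (auto simp: detour_positions_def card_insert_if)
qed

lemma insert_detour_in_rooted_circuits:
  assumes G: "G \<in> rooted_circuits r M" and j: "j \<in> detour_positions r p G"
  shows "insert_detour p w G j \<in> rooted_circuits r (M + {#(p, w), (w, p)#})"
proof -
  have G_ne: "G \<noteq> []" and hd_G: "hd G = r" and E: "circuit_edges G = M"
    using G by (auto simp: rooted_circuits_def)
  have hd_drop: "hd (drop j G @ take j G) = p"
  proof (cases "j < length G")
    case True
    with j show ?thesis
      by (auto simp: detour_positions_def hd_drop_conv_nth split: if_splits)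
  next
    case False
    with j G_ne hd_G show ?thesis
      by (auto simp: detour_positions_def split: if_splits)
  qed
  have "hd (insert_detour p w G j) = r"
  proof (cases j)
    case 0
    with j G_ne hd_G show ?thesis
      by (auto simp: insert_detour_def detour_positions_def hd_conv_nth split: if_splits)
  next
    case (Suc k)
    with G_ne hd_G show ?thesis
      by (cases G) (auto simp: insert_detour_def)
  qed
  moreover have "circuit_edges (insert_detour p w G j) = M + {#(p, w), (w, p)#}"
    using circuit_edges_insert_detour[of "take j G" "drop j G" p w] G_ne hd_drop E
    by (simp add: insert_detour_def)
  ultimately show ?thesis
    by (simp add: rooted_circuits_def insert_detour_def)
qed

lemma insert_detour_inj:
  assumes eq: "insert_detour p w G1 j1 = insert_detour p w G2 j2"
    and "w \<notin> set G1" "w \<noteq> p" and "j1 \<le> length G1" "j2 \<le> length G2"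
  shows "G1 = G2 \<and> j1 = j2"
proof -
  have "w \<notin> set (take j1 G1 @ [p])" "w \<notin> set (drop j1 G1)"
    using assms(2,3) by (auto dest: in_set_takeD in_set_dropD)
  with eq have "take j1 G1 = take j2 G2" "drop j1 G1 = drop j2 G2"
    using append_Cons_eq_iff[of w "take j1 G1 @ [p]" "drop j1 G1" "take j2 G2 @ [p]" "drop j2 G2"]
    by (simp_all add: insert_detour_def)
  then show ?thesis
    using assms(4,5) by (metis append_take_drop_id length_take min.absorb2)
qed

lemma rooted_circuits_remove_leafE:
  assumes G: "G \<in> rooted_circuits r (M + {#(p, w), (w, p)#})"
    and w: "w \<notin># image_mset fst M" and p: "p \<in># image_mset fst M" and "r \<noteq> w"
  obtains G' j where "G' \<in> rooted_circuits r M" "j \<in> detour_positions r p G'"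
    "G = insert_detour p w G' j"
proof -
  have hd_G: "hd G = r" and E: "circuit_edges G = M + {#(p, w), (w, p)#}"
    using G by (auto simp: rooted_circuits_def)
  have "mset G = image_mset fst M + {#p, w#}"
    using arg_cong[OF E, of "image_mset fst"] by simp
  with w p have w1: "count (mset G) w = 1"
    by (auto simp: count_eq_zero_iff)
  have len: "length G \<ge> 3"
  proof -
    have "length G = size M + 2"
      using arg_cong[OF E, of size] by simp
    moreover have "size M \<noteq> 0"
      using p by (cases M) auto
    ultimately show ?thesis
      by linarith
  qed
  have pw: "(p, w) \<in># circuit_edges G" and wp: "(w, p) \<in># circuit_edges G"
    using E by simp_all
  have "hd G \<noteq> w"
    using hd_G \<open>r \<noteq> w\<close> by simp
  then obtain a b where ab: "G = a @ p # w # b" "a @ b \<noteq> []" "hd (b @ a) = p"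
    "hd (a @ b) = hd G" "circuit_edges G = circuit_edges (a @ b) + {#(p, w), (w, p)#}"
    by (rule circuit_split_at_leaf[OF w1 _ pw wp len])
  show thesis
  proof
    show "a @ b \<in> rooted_circuits r M"
      using ab E hd_G by (simp add: rooted_circuits_def)
    show "length a \<in> detour_positions r p (a @ b)"
      using ab hd_G by (cases b) (auto simp: detour_positions_def)
    show "G = insert_detour p w (a @ b) (length a)"
      using ab by (simp add: insert_detour_def)
  qed
qed

lemma card_rooted_circuits_add_leaf:
  assumes w: "w \<notin># image_mset fst M" and p: "p \<in># image_mset fst M" and "r \<noteq> w"
  shows "card (rooted_circuits r (M + {#(p, w), (w, p)#}))
    = card (rooted_circuits r M) * (count (image_mset fst M) p + of_bool (p = r))"
proof -
  let ?D = "SIGMA G:rooted_circuits r M. detour_positions r p G"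
  have mset_G: "mset G = image_mset fst M" if "G \<in> rooted_circuits r M" for G
    using that by (auto simp: rooted_circuits_def)
  have "rooted_circuits r (M + {#(p, w), (w, p)#}) = case_prod (insert_detour p w) ` ?D"
  proof (intro equalityI subsetI)
    fix G
    assume "G \<in> rooted_circuits r (M + {#(p, w), (w, p)#})"
    then obtain G' j where "G' \<in> rooted_circuits r M" "j \<in> detour_positions r p G'"
      "G = insert_detour p w G' j"
      by (rule rooted_circuits_remove_leafE[OF _ w p \<open>r \<noteq> w\<close>])
    then show "G \<in> case_prod (insert_detour p w) ` ?D"
      by blast
  qed (clarify, rule insert_detour_in_rooted_circuits)
  moreover have "inj_on (case_prod (insert_detour p w)) ?D"
  proof (rule inj_onI, clarsimp)
    fix G1 j1 G2 j2
    assume G1: "G1 \<in> rooted_circuits r M" and j1: "j1 \<in> detour_positions r p G1"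
      and j2: "j2 \<in> detour_positions r p G2"
      and eq: "insert_detour p w G1 j1 = insert_detour p w G2 j2"
    have "w \<notin> set G1"
      using w mset_G[OF G1] by (metis set_image_mset set_mset_mset)
    moreover have "w \<noteq> p"
      using w p by auto
    moreover have "j1 \<le> length G1" "j2 \<le> length G2"
      using j1 j2 by (auto simp: detour_positions_def split: if_splits)
    ultimately show "G1 = G2 \<and> j1 = j2"
      using eq insert_detour_inj by metis
  qed
  ultimately have "card (rooted_circuits r (M + {#(p, w), (w, p)#})) = card ?D"
    by (simp add: card_image)
  also have "\<dots> = (\<Sum>G\<in>rooted_circuits r M. card (detour_positions r p G))"
    by (rule card_SigmaI) (simp_all add: finite_rooted_circuits detour_positions_def)
  also have "\<dots> = (\<Sum>G\<in>rooted_circuits r M. count (image_mset fst M) p + of_bool (p = r))"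
    by (rule sum.cong) (simp_all add: card_detour_positions mset_G)
  finally show ?thesis
    by simp
qed

text \<open>A circuit with symmetric edge multiset on \<open>n\<close> vertices has at least \<open>2 (n - 1)\<close> edges,
  with equality exactly when it walks around a tree; unlike balanced trees, this condition is
  preserved under removal of a leaf.\<close>

definition tree_route :: "'a list \<Rightarrow> bool" where
  "tree_route T \<longleftrightarrow> length T + 2 = 2 * card (set T) \<and>
     (\<forall>u v. count (circuit_edges T) (u, v) = count (circuit_edges T) (v, u))"

lemma tree_route_two_leaves:
  assumes "tree_route T"
  shows "2 \<le> card {v \<in> set T. count (mset T) v = 1}"
proof -
  let ?L = "{v \<in> set T. count (mset T) v = 1}"
  have "(\<Sum>v\<in>set T. 2) \<le> (\<Sum>v\<in>set T. count (mset T) v + of_bool (count (mset T) v = 1))"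
  proof (rule sum_mono)
    have "2 \<le> c + of_bool (c = 1)" if "c \<noteq> 0" for c :: nat
      using that by (cases "c = 1") simp_all
    then show "2 \<le> count (mset T) v + of_bool (count (mset T) v = 1)" if "v \<in> set T" for v
      using that by simp
  qed
  also have "\<dots> = length T + card ?L"
    by (simp add: sum.distrib count_mset sum_count_set Int_def)
  finally show ?thesis
    using assms by (simp add: tree_route_def)
qed

lemma tree_route_remove_leaf:
  assumes T: "tree_route T" and E: "circuit_edges T = circuit_edges T' + {#(p, w), (w, p)#}"
    and "p \<in> set T'" "w \<notin> set T'"
  shows "tree_route T'"
proof -
  have mset_T: "mset T = mset T' + {#p, w#}"
    using arg_cong[OF E, of "image_mset fst"] by simp
  have "length T = length T' + 2"
    using arg_cong[OF mset_T, of size] by simp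
  moreover have "set T = insert w (set T')"
    using arg_cong[OF mset_T, of set_mset] assms(3) by auto
  moreover have "length T + 2 = 2 * card (set T)"
    using T unfolding tree_route_def by blast
  ultimately have "length T' + 2 = 2 * card (set T')"
    using assms(4) by simp
  moreover have "count (circuit_edges T') (u, v) = count (circuit_edges T') (v, u)" for u v
  proof -
    let ?P = "{#(p, w), (w, p)#}"
    have "count (circuit_edges T' + ?P) (u, v) = count (circuit_edges T' + ?P) (v, u)"
      using T unfolding tree_route_def E by blast
    moreover have "count ?P (u, v) = count ?P (v, u)"
      by (cases "u = p"; cases "v = w"; cases "u = w"; cases "v = p") simp_all
    ultimately show ?thesis
      by (simp only: count_union)
  qed
  ultimately show ?thesis
    by (simp add: tree_route_def)
qed

lemma tree_route_remove_leafE: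
  assumes T: "tree_route T" and len: "length T \<ge> 4" and w: "count (mset T) w = 1"
  obtains T' p where "tree_route T'" "p \<in> set T'" "w \<notin> set T'"
    "circuit_edges T = circuit_edges T' + {#(p, w), (w, p)#}"
proof -
  define T1 where "T1 = (if hd T = w then rotate1 T else T)"
  have E1: "circuit_edges T1 = circuit_edges T" and mset_T1: "mset T1 = mset T"
    and len_T1: "length T1 = length T"
    by (simp_all add: T1_def)
  have hd_T1: "hd T1 \<noteq> w"
  proof (cases T)
    case (Cons x t)
    with w have "x = w \<Longrightarrow> w \<notin> set t"
      by (simp add: count_eq_zero_iff)
    moreover have "t \<noteq> []"
      using Cons len by auto
    ultimately show ?thesis
      using Cons by (auto simp: T1_def)
  qed (use len in simp)
  have "w \<in> set T"
    using w by (metis count_mset_0_iff zero_neq_one)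
  then have "w \<in> snd ` set_mset (circuit_edges T)"
    by (metis image_mset_snd_circuit_edges set_image_mset set_mset_mset)
  then obtain p where pw: "(p, w) \<in># circuit_edges T"
    by force
  moreover have "(w, p) \<in># circuit_edges T"
    using pw T unfolding tree_route_def by (metis count_eq_zero_iff)
  ultimately have pw1: "(p, w) \<in># circuit_edges T1" and wp1: "(w, p) \<in># circuit_edges T1"
    by (simp_all add: E1)
  have w1: "count (mset T1) w = 1" and len1: "length T1 \<ge> 3"
    using w len by (simp_all add: mset_T1 len_T1)
  obtain a b where ab: "T1 = a @ p # w # b" "a @ b \<noteq> []" "hd (b @ a) = p" "hd (a @ b) = hd T1"
    "circuit_edges T1 = circuit_edges (a @ b) + {#(p, w), (w, p)#}"
    by (rule circuit_split_at_leaf[OF w1 hd_T1 pw1 wp1 len1])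
  have "p \<in> set (a @ b)"
    using ab(2,3) by (cases b) auto
  moreover have "w \<notin> set (a @ b)"
  proof -
    have "count (mset (a @ b)) w = 0"
      using w1 ab(1) by (simp split: if_splits)
    then show ?thesis
      by (simp add: count_mset_0_iff)
  qed
  ultimately show thesis
    using that tree_route_remove_leaf[OF T] ab(5) E1 by metis
qed

lemma tree_route_induct [consumes 1, case_names pair leaf]:
  assumes "tree_route T"
    and pair: "\<And>a b. a \<noteq> b \<Longrightarrow> P [a, b]"
    and leaf: "\<And>T T' p w. tree_route T' \<Longrightarrow> P T' \<Longrightarrow> p \<in> set T' \<Longrightarrow> w \<notin> set T' \<Longrightarrow> w \<noteq> r
      \<Longrightarrow> circuit_edges T = circuit_edges T' + {#(p, w), (w, p)#} \<Longrightarrow> P T"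
  shows "P T"
  using assms(1)
proof (induction "length T" arbitrary: T rule: less_induct)
  case less
  then have len: "length T + 2 = 2 * card (set T)"
    by (simp add: tree_route_def)
  then have "length T \<noteq> 0"
    by auto
  with len have "length T = 2 \<or> length T \<ge> 4"
    by presburger
  then consider "length T = 2" | "length T \<ge> 4"
    by blast
  then show ?case
  proof cases
    case 1
    then obtain a b where T: "T = [a, b]"
      by (auto simp: length_Suc_conv numeral_2_eq_2)
    with len 1 have "a \<noteq> b"
      by (cases "a = b") auto
    with T pair show ?thesis
      by simp
  next
    case 2
    obtain w where w: "count (mset T) w = 1" and "w \<noteq> r"
    proof (rule ccontr)
      assume "\<not> thesis"
      with that have "{v \<in> set T. count (mset T) v = 1} \<subseteq> {r}"
        by blast
      then have "card {v \<in> set T. count (mset T) v = 1} \<le> 1"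
        using card_mono[of "{r}"] by simp
      with tree_route_two_leaves[OF less.prems] show False
        by simp
    qed
    obtain T' p where T': "tree_route T'" "p \<in> set T'" "w \<notin> set T'"
      "circuit_edges T = circuit_edges T' + {#(p, w), (w, p)#}"
      by (rule tree_route_remove_leafE[OF less.prems 2 w])
    have "length T' < length T"
      using size_circuit_edges[of T] T'(4) by simp
    with T' less.hyps have "P T'"
      by blast
    with T' \<open>w \<noteq> r\<close> show ?thesis
      by (blast intro: leaf)
  qed
qed

lemma tree_route_count_circuit_edges:
  assumes "tree_route T"
  shows "count (circuit_edges T) (u, v) \<le> of_bool (u \<noteq> v)"
  using assms
proof (induction rule: tree_route_induct[where r = undefined])
  case (pair a b)
  then show ?case
    by (cases "u = a"; cases "v = b"; cases "u = b"; cases "v = a") (simp_all add: circuit_edges_pair)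
next
  case (leaf T T' p w)
  let ?P = "{#(p, w), (w, p)#}"
  have "p \<noteq> w"
    using \<open>p \<in> set T'\<close> \<open>w \<notin> set T'\<close> by auto
  have count_T: "count (circuit_edges T) (u, v) = count (circuit_edges T') (u, v) + count ?P (u, v)"
    using \<open>circuit_edges T = circuit_edges T' + ?P\<close> by (simp only: count_union)
  show ?case
  proof (cases "u = w \<or> v = w")
    case True
    then have "(u, v) \<notin># circuit_edges T'"
      using \<open>w \<notin> set T'\<close> set_circuit_edges_subset[of T'] by blast
    then have "count (circuit_edges T') (u, v) = 0"
      by (simp add: not_in_iff)
    moreover have "count ?P (u, v) \<le> of_bool (u \<noteq> v)"
      using \<open>p \<noteq> w\<close> by (cases "u = p"; cases "v = w"; cases "u = w"; cases "v = p") simp_all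
    ultimately show ?thesis
      using count_T by linarith
  next
    case False
    then have "count ?P (u, v) = 0"
      by auto
    with leaf.IH count_T show ?thesis
      by simp
  qed
qed

lemma prod_fact_count_add_leaf:
  assumes p: "p \<in># X" and w: "w \<notin># X"
  shows "(\<Prod>v\<in>set_mset (X + {#p, w#}). fact (count (X + {#p, w#}) v - 1) :: nat)
    = count X p * (\<Prod>v\<in>set_mset X. fact (count X v - 1))"
proof -
  let ?Y = "X + {#p, w#}"
  have "p \<noteq> w"
    using p w by auto
  have "(\<Prod>v\<in>set_mset ?Y. fact (count ?Y v - 1) :: nat) = (\<Prod>v\<in>set_mset X. fact (count ?Y v - 1))"
    using p w by (simp add: insert_absorb not_in_iff)
  also have "\<dots> = fact (count ?Y p - 1) * (\<Prod>v\<in>set_mset X - {p}. fact (count ?Y v - 1))"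
    using p by (simp add: prod.remove)
  also have "(\<Prod>v\<in>set_mset X - {p}. fact (count ?Y v - 1)) = (\<Prod>v\<in>set_mset X - {p}. fact (count X v - 1))"
    using w by (intro prod.cong) auto
  also have "fact (count ?Y p - 1) = count X p * (fact (count X p - 1) :: nat)"
    using p \<open>p \<noteq> w\<close> by (simp add: fact_reduce[of "count X p"])
  also have "count X p * fact (count X p - 1) * (\<Prod>v\<in>set_mset X - {p}. fact (count X v - 1))
      = count X p * (\<Prod>v\<in>set_mset X. fact (count X v - 1))"
    using p by (simp add: prod.remove)
  finally show ?thesis .
qed

lemma card_rooted_circuits_tree_route:
  assumes "tree_route T" and "r \<in> set T"
  shows "card (rooted_circuits r (circuit_edges T))
    = count (mset T) r * (\<Prod>v\<in>set T. fact (count (mset T) v - 1))"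
  using assms
proof (induction rule: tree_route_induct[where r = r])
  case (pair a b)
  then consider "r = a" | "r = b"
    by auto
  then show ?case
  proof cases
    case 1
    with pair show ?thesis
      by (simp add: circuit_edges_pair rooted_circuits_pair)
  next
    case 2
    with pair show ?thesis
      by (simp add: circuit_edges_pair rooted_circuits_pair add_mset_commute[of "(a, b)"])
  qed
next
  case (leaf T T' p w)
  let ?c = "count (mset T')" and ?F = "\<Prod>v\<in>set T'. fact (count (mset T') v - 1)"
  note E = \<open>circuit_edges T = circuit_edges T' + {#(p, w), (w, p)#}\<close>
  have mset_T: "mset T = mset T' + {#p, w#}"
    using arg_cong[OF E, of "image_mset fst"] by simp
  have "r \<in> set T'"
    using leaf.prems arg_cong[OF mset_T, of set_mset] \<open>w \<noteq> r\<close> \<open>p \<in> set T'\<close> by auto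
  have count_r: "count (mset T) r = ?c r + of_bool (p = r)"
    using mset_T \<open>w \<noteq> r\<close> by simp
  have "(\<Prod>v\<in>set T. fact (count (mset T) v - 1)) = (\<Prod>v\<in>set_mset (mset T' + {#p, w#}).
      fact (count (mset T' + {#p, w#}) v - 1))"
    by (metis mset_T set_mset_mset)
  also have "\<dots> = ?c p * ?F"
    using prod_fact_count_add_leaf[of p "mset T'" w] leaf.hyps(2,3) by simp
  finally have prod_T: "(\<Prod>v\<in>set T. fact (count (mset T) v - 1)) = ?c p * ?F" .
  have "card (rooted_circuits r (circuit_edges T))
      = card (rooted_circuits r (circuit_edges T')) * (?c p + of_bool (p = r))"
    using card_rooted_circuits_add_leaf[of w "circuit_edges T'" p r] E leaf.hyps(2-4)
    by simp
  also have "\<dots> = ?c r * ?F * (?c p + of_bool (p = r))"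
    using leaf.IH \<open>r \<in> set T'\<close> by simp
  also have "\<dots> = (?c r + of_bool (p = r)) * (?c p * ?F)"
    by (cases "p = r") (simp_all add: algebra_simps)
  also have "\<dots> = count (mset T) r * (\<Prod>v\<in>set T. fact (count (mset T) v - 1))"
    by (simp only: count_r prod_T)
  finally show ?case .
qed

lemma card_circuits_tree_route:
  assumes "tree_route T"
  shows "card (\<Union>r\<in>set T. rooted_circuits r (circuit_edges T))
    = length T * (\<Prod>v\<in>set T. fact (count (mset T) v - 1))"
proof -
  have "card (\<Union>r\<in>set T. rooted_circuits r (circuit_edges T))
      = (\<Sum>r\<in>set T. card (rooted_circuits r (circuit_edges T)))"
  proof (rule card_UN_disjoint)
    show "\<forall>r\<in>set T. \<forall>r'\<in>set T. r \<noteq> r' \<longrightarrow>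
        rooted_circuits r (circuit_edges T) \<inter> rooted_circuits r' (circuit_edges T) = {}"
      by (auto simp: rooted_circuits_def)
  qed (simp_all add: finite_rooted_circuits)
  also have "\<dots> = (\<Sum>r\<in>set T. count (mset T) r) * (\<Prod>v\<in>set T. fact (count (mset T) v - 1))"
    by (simp add: card_rooted_circuits_tree_route[OF assms] sum_distrib_right)
  also have "(\<Sum>r\<in>set T. count (mset T) r) = length T"
    by (simp add: count_mset sum_count_set)
  finally show ?thesis .
qed

lemma adj_sym_if_balanced:
  assumes "balanced G"
  shows "adj G u v = adj G v u"
proof -
  obtain \<sigma> where \<sigma>: "\<And>k. k < length G \<Longrightarrow> \<sigma> k < length G \<and> \<sigma> (\<sigma> k) = k \<and>
      ehead G k = etail G (\<sigma> k) \<and> etail G k = ehead G (\<sigma> k)"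
    using assms unfolding balanced_def by blast
  let ?A = "\<lambda>x y. {k. k < length G \<and> etail G k = x \<and> ehead G k = y}"
  have swap: "\<sigma> k \<in> ?A y x" and "\<sigma> (\<sigma> k) = k" if "k \<in> ?A x y" for x y k
    using that \<sigma>[of k] by auto
  then have "bij_betw \<sigma> (?A u v) (?A v u)"
    by (intro bij_betw_byWitness[where f' = \<sigma>]) blast+
  then show ?thesis
    unfolding adj_def by (rule bij_betw_same_card)
qed

lemma balanced_if_adj_sym:
  assumes sym: "\<And>u v. adj G u v = adj G v u" and simple: "\<And>u v. adj G u v \<le> of_bool (u \<noteq> v)"
  shows "balanced G"
proof -
  let ?A = "\<lambda>x y. {k. k < length G \<and> etail G k = x \<and> ehead G k = y}"
  define rev where "rev k = ?A (ehead G k) (etail G k)" for k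
  have loop_free: "etail G k \<noteq> ehead G k" and unique_rev: "\<exists>!k'. k' \<in> rev k"
    if k: "k < length G" for k
  proof -
    have "?A (etail G k) (ehead G k) \<noteq> {}"
      using k by blast
    then have pos: "adj G (etail G k) (ehead G k) \<noteq> 0"
      by (simp add: adj_def)
    then show "etail G k \<noteq> ehead G k"
      using simple[of "etail G k" "ehead G k"] by auto
    have "card (rev k) = adj G (etail G k) (ehead G k)"
      using sym by (simp add: adj_def rev_def)
    also have "\<dots> = 1"
      using pos simple[of "etail G k" "ehead G k"] by (cases "etail G k = ehead G k") simp_all
    finally show "\<exists>!k'. k' \<in> rev k"
      by (auto simp: card_1_singleton_iff)
  qed
  define \<sigma> where "\<sigma> k = (THE k'. k' \<in> rev k)" for k
  have \<sigma>: "\<sigma> k \<in> rev k" if "k < length G" for k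
    unfolding \<sigma>_def using theI'[OF unique_rev[OF that]] .
  have "\<sigma> k < length G \<and> \<sigma> k \<noteq> k \<and> \<sigma> (\<sigma> k) = k \<and>
      ehead G k = etail G (\<sigma> k) \<and> etail G k = ehead G (\<sigma> k)" if k: "k < length G" for k
  proof -
    have "\<sigma> k < length G" "etail G (\<sigma> k) = ehead G k" "ehead G (\<sigma> k) = etail G k"
      using \<sigma>[OF k] by (simp_all add: rev_def)
    moreover have "\<sigma> k \<noteq> k"
      using loop_free[OF k] calculation by auto
    moreover have "\<sigma> (\<sigma> k) = k"
      using \<sigma>[of "\<sigma> k"] unique_rev[of "\<sigma> k"] k calculation by (auto simp: rev_def)
    ultimately show ?thesis
      by simp
  qed
  then show ?thesis
    unfolding balanced_def by blast
qed

lemma tree_route_if_balanced_tree: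
  assumes "T \<in> balanced_trees V l" and "card V = l + 1"
  shows "tree_route T"
proof -
  have "length T = 2 * l" "set T = V" "balanced T"
    using assms(1) by (simp_all add: balanced_trees_def circuit_graphs_def is_route_def)
  moreover have "count (circuit_edges T) (u, v) = count (circuit_edges T) (v, u)" for u v
    using adj_sym_if_balanced[OF \<open>balanced T\<close>, of u v] by (simp add: adj_eq_count_circuit_edges)
  ultimately show ?thesis
    using assms(2) by (simp add: tree_route_def)
qed

lemma balanced_trees_with_adj_eq:
  assumes T: "T \<in> balanced_trees V l" and card_V: "card V = l + 1"
  shows "{G \<in> balanced_trees V l. adj G = adj T} = (\<Union>r\<in>set T. rooted_circuits r (circuit_edges T))"
proof (intro equalityI subsetI)
  fix G
  assume "G \<in> {G \<in> balanced_trees V l. adj G = adj T}"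
  then have G: "G \<in> balanced_trees V l" and E: "circuit_edges G = circuit_edges T"
    by (simp_all add: adj_eq_iff_circuit_edges_eq)
  from G T have "G \<noteq> []" and "set G = set T"
    by (auto simp: balanced_trees_def circuit_graphs_def is_route_def)
  with E have "G \<in> rooted_circuits (hd G) (circuit_edges T)" and "hd G \<in> set T"
    by (simp_all add: rooted_circuits_def flip: \<open>set G = set T\<close>)
  then show "G \<in> (\<Union>r\<in>set T. rooted_circuits r (circuit_edges T))"
    by blast
next
  fix G
  assume "G \<in> (\<Union>r\<in>set T. rooted_circuits r (circuit_edges T))"
  then have E: "circuit_edges G = circuit_edges T"
    by (simp add: rooted_circuits_def)
  then have adj_G: "adj G = adj T"
    by (simp add: adj_eq_iff_circuit_edges_eq)
  have "mset G = mset T"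
    using E by (metis image_mset_fst_circuit_edges)
  then have "length G = length T" "set G = set T"
    by (metis size_mset, metis set_mset_mset)
  moreover have "balanced G"
  proof (rule balanced_if_adj_sym)
    have "balanced T"
      using T by (simp add: balanced_trees_def)
    then show "adj G u v = adj G v u" for u v
      using adj_sym_if_balanced adj_G by metis
    show "adj G u v \<le> of_bool (u \<noteq> v)" for u v
      using tree_route_count_circuit_edges[OF tree_route_if_balanced_tree[OF T card_V]] adj_G
      by (simp add: adj_eq_count_circuit_edges)
  qed
  ultimately show "G \<in> {G \<in> balanced_trees V l. adj G = adj T}"
    using T adj_G by (simp add: balanced_trees_def circuit_graphs_def is_route_def)
qed

theorem lemma3p10:
  fixes l :: nat and T :: "nat list"
  assumes "T \<in> balanced_trees {1..l+1} l"
  shows "card {G \<in> balanced_trees {1..l+1} l. adj G = adj T}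
           = 2 * l * (\<Prod>i = 1..l+1. fact (indeg T i - 1))"
proof -
  have T: "tree_route T"
    using assms by (rule tree_route_if_balanced_tree) simp
  have set_T: "set T = {1..l+1}" and "length T = 2 * l"
    using assms by (auto simp: balanced_trees_def circuit_graphs_def is_route_def)
  have "card {G \<in> balanced_trees {1..l+1} l. adj G = adj T}
      = card (\<Union>r\<in>set T. rooted_circuits r (circuit_edges T))"
    using balanced_trees_with_adj_eq[OF assms] by simp
  also have "\<dots> = length T * (\<Prod>v\<in>set T. fact (count (mset T) v - 1))"
    by (rule card_circuits_tree_route[OF T])
  also have "\<dots> = 2 * l * (\<Prod>i = 1..l+1. fact (indeg T i - 1))"
    unfolding set_T \<open>length T = 2 * l\<close> by (simp add: indeg_eq_count_mset)
  finally show ?thesis .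
qed

end
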